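(* In the setting of the context, suppose the weights are the true weights, $\omega=\omega_0$, and that $B^2/\sigma_a^2(g,\omega_0)\le n_0$ for $a\in\{0,1\}$. Write $s=\sqrt{\frac{\sigma_0^2(g,\omega_0)}{n_0}+\frac{\sigma_1^2(g,\omega_0)}{n_1}}$. Then with probability at least $\frac{7}{1440}$, $$ 12\,s\;\ge\;\left|\big(\mathcal{E}_0(g)-\mathcal{E}_1(g)\big)-\big(\widehat{\mathcal{E}}_0(g,\omega)-\widehat{\mathcal{E}}_1(g,\omega)\big)\right|\;\ge\;\frac{1}{24}\,s . $$ Additionally (on this event), if $\widehat{\Delta}_S(g,\omega)\ge\frac{13}{2}s$ then $|\Delta_T(g)-\widehat{\Delta}_S(g,\omega)|\ge\frac{1}{24}s$, and if $\widehat{\Delta}_S(g,\omega)\le\frac{1}{72}s$ then $|\Delta_T(g)-\widehat{\Delta}_S(g,\omega)|\ge\frac{1}{72}s$.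
   Context: A random sample of observations is drawn from a target population; each has data vector $z=(x,y)$, possibly with missing entries, and a binary sensitive attribute $A\in\{0,1\}$. $R=1$ if $z$ is fully observed (complete case). $\mathcal{D}_{T_a}$ is the distribution of $z$ in group $A=a$; $\mathcal{D}_{S_a}$ is the distribution of $z$ given $R=1,A=a$, with expectation/variance $\mathbb{E}_{S_a}$, $\mathrm{Var}_{S_a}$; $\mathbb{E}_S$ is expectation under the distribution of complete cases. A fixed prediction model $g$ and the response take values in $[0,1]$. $\mathcal{E}_a(g)=\mathbb{E}_{T_a}|g(x)-y|$, $\Delta_T(g)=|\mathcal{E}_0(g)-\mathcal{E}_1(g)|$. The true propensity score is $\pi(z,A)=P_T(R=1\mid z,A)$ and the true weights are $\omega_0(z,A)=\left[\pi(z,A)\,\mathbb{E}_S\{1/\pi(z',A')\mid A'=A\}\right]^{-1}$, assumed bounded with $B=\sup_z\omega_0(z,A)<\infty$. $\sigma_a^2(g,\omega)=\mathrm{Var}_{S_a}(\omega(z,a)|g(x)-y|)$. The complete cases consist of $n_0$ i.i.d. draws from $\mathcal{D}_{S_0}$ and $n_1$ i.i.d. draws from $\mathcal{D}_{S_1}$, with $n_0\le n_1$. The weighted empirical risk is $\widehat{\mathcal{E}}_a(g,\omega)=\frac{1}{n_a}\sum_{i:\,A_i=a,R_i=1}\omega(z_i,a)|g(x_i)-y_i|$ and $\widehat{\Delta}_S(g,\omega)=|\widehat{\mathcal{E}}_0(g,\omega)-\widehat{\mathcal{E}}_1(g,\omega)|$. *)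

theory Defs
  imports "HOL-Probability.Probability"
begin

text \<open>Data points z = (x, y); groups a are encoded by the naturals 0 and 1.
  T a : the target distribution D_{T_a} of z in group a.
  pr z a : the true propensity score P_T(R = 1 | z, A = a).\<close>

definition loss :: "('x \<Rightarrow> real) \<Rightarrow> 'x \<times> real \<Rightarrow> real" where
  "loss g z = \<bar>g (fst z) - snd z\<bar>"

text \<open>Distribution D_{S_a} of z given R = 1, A = a (Bayes' rule):
  density pr(.,a) / E_{T_a}[pr(.,a)] with respect to D_{T_a}.\<close>
definition cc_dist :: "(nat \<Rightarrow> ('x \<times> real) measure) \<Rightarrow> ('x \<times> real \<Rightarrow> nat \<Rightarrow> real)
    \<Rightarrow> nat \<Rightarrow> ('x \<times> real) measure" where
  "cc_dist T pr a = density (T a) (\<lambda>z. ennreal (pr z a / (\<integral>z'. pr z' a \<partial>T a)))"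

definition true_weight :: "(nat \<Rightarrow> ('x \<times> real) measure) \<Rightarrow> ('x \<times> real \<Rightarrow> nat \<Rightarrow> real)
    \<Rightarrow> 'x \<times> real \<Rightarrow> nat \<Rightarrow> real" where
  "true_weight T pr z a = 1 / (pr z a * (\<integral>z'. 1 / pr z' a \<partial>cc_dist T pr a))"

definition true_risk :: "(nat \<Rightarrow> ('x \<times> real) measure) \<Rightarrow> ('x \<Rightarrow> real) \<Rightarrow> nat \<Rightarrow> real" where
  "true_risk T g a = (\<integral>z. loss g z \<partial>T a)"

definition sigma2 :: "(nat \<Rightarrow> ('x \<times> real) measure) \<Rightarrow> ('x \<times> real \<Rightarrow> nat \<Rightarrow> real)
    \<Rightarrow> ('x \<Rightarrow> real) \<Rightarrow> ('x \<times> real \<Rightarrow> nat \<Rightarrow> real) \<Rightarrow> nat \<Rightarrow> real" where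
  "sigma2 T pr g w a = prob_space.variance (cc_dist T pr a) (\<lambda>z. w z a * loss g z)"

definition emp_risk :: "('x \<Rightarrow> real) \<Rightarrow> ('x \<times> real \<Rightarrow> nat \<Rightarrow> real) \<Rightarrow> nat \<Rightarrow> nat
    \<Rightarrow> (nat \<Rightarrow> 'x \<times> real) \<Rightarrow> real" where
  "emp_risk g w a n u = (1 / real n) * (\<Sum>i<n. w (u i) a * loss g (u i))"

definition sample_space :: "(nat \<Rightarrow> ('x \<times> real) measure) \<Rightarrow> ('x \<times> real \<Rightarrow> nat \<Rightarrow> real)
    \<Rightarrow> nat \<Rightarrow> nat \<Rightarrow> ((nat \<Rightarrow> 'x \<times> real) \<times> (nat \<Rightarrow> 'x \<times> real)) measure" where
  "sample_space T pr n0 n1 =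
     (PiM {..<n0} (\<lambda>_. cc_dist T pr 0)) \<Otimes>\<^sub>M (PiM {..<n1} (\<lambda>_. cc_dist T pr 1))"

end

theory Submission
  imports Defs
begin

text \<open>Under the complete-case distribution of group a, the true weights turn the weighted loss
  w(z,a) |g(x) - y| into an unbiased estimate of the group risk E_a(g). Hence the deviation
  D = (E_0 - E_1) - (hat E_0 - hat E_1) is a difference of two independent sample means of centred
  variables bounded by B, so E D^2 = s^2, and a fourth-moment computation together with
  B^2 <= n_a sigma_a^2 gives E D^4 <= 4 s^4. The quartic
  q(t) = t^2/(36 s^2) - t^4/(5184 s^4) - 1/20736 lies below the indicator of the band
  s/24 <= |t| <= 12 s, so the band has probability at least E q(D) >= 559/20736 > 7/1440.
  On the band, the two claims about |Delta_T - hat Delta_S| follow from the triangle inequality.\<close>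

lemma integrable_power_of_AE_bounded:
  fixes h :: "'a \<Rightarrow> real"
  assumes "finite_measure M" "h \<in> borel_measurable M" "AE x in M. \<bar>h x\<bar> \<le> C"
  shows "integrable M (\<lambda>x. h x ^ k)"
proof (rule finite_measure.integrable_const_bound[OF assms(1), where B = "C ^ k"])
  show "AE x in M. norm (h x ^ k) \<le> C ^ k"
    using assms(3) by eventually_elim (auto simp: power_abs intro: power_mono)
qed (use assms(2) in simp)

lemma integral_power4_le_bound_times_square:
  fixes f :: "'a \<Rightarrow> real"
  assumes "finite_measure M" "f \<in> borel_measurable M" "AE x in M. \<bar>f x\<bar> \<le> C"
  shows "(\<integral>x. f x ^ 4 \<partial>M) \<le> C\<^sup>2 * (\<integral>x. f x ^ 2 \<partial>M)"
proof -
  have "(\<integral>x. f x ^ 4 \<partial>M) \<le> (\<integral>x. C\<^sup>2 * f x ^ 2 \<partial>M)"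
  proof (rule integral_mono_AE)
    show "AE x in M. f x ^ 4 \<le> C\<^sup>2 * f x ^ 2"
      using assms(3)
    proof eventually_elim
      case (elim x)
      then have "\<bar>f x\<bar> ^ 2 \<le> C\<^sup>2" by (intro power_mono) auto
      then have "f x ^ 2 \<le> C\<^sup>2" by simp
      then have "f x ^ 2 * f x ^ 2 \<le> C\<^sup>2 * f x ^ 2" by (rule mult_right_mono) simp
      then show ?case by (simp add: power_numeral_reduce)
    qed
  qed (use integrable_power_of_AE_bounded[OF assms] in simp_all)
  then show ?thesis by simp
qed

lemma iterated_integral_moments_of_sum:
  fixes U :: "'a \<Rightarrow> real" and V :: "'b \<Rightarrow> real"
  assumes M: "prob_space M" and N: "prob_space N"
    and U: "U \<in> borel_measurable M" "AE x in M. \<bar>U x\<bar> \<le> c" "(\<integral>x. U x \<partial>M) = 0"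
    and V: "V \<in> borel_measurable N" "AE y in N. \<bar>V y\<bar> \<le> d" "(\<integral>y. V y \<partial>N) = 0"
  shows "(\<integral>x. (\<integral>y. U x + V y \<partial>N) \<partial>M) = 0"
    and "(\<integral>x. (\<integral>y. (U x + V y)\<^sup>2 \<partial>N) \<partial>M) = (\<integral>x. U x ^ 2 \<partial>M) + (\<integral>y. V y ^ 2 \<partial>N)"
    and "(\<integral>x. (\<integral>y. (U x + V y) ^ 4 \<partial>N) \<partial>M)
      = (\<integral>x. U x ^ 4 \<partial>M) + 6 * (\<integral>x. U x ^ 2 \<partial>M) * (\<integral>y. V y ^ 2 \<partial>N) + (\<integral>y. V y ^ 4 \<partial>N)"
proof -
  interpret M: prob_space M by fact
  interpret N: prob_space N by fact
  have iU: "integrable M (\<lambda>x. U x ^ k)" for k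
    by (rule integrable_power_of_AE_bounded[OF M.finite_measure_axioms U(1,2)])
  have iV: "integrable N (\<lambda>y. V y ^ k)" for k
    by (rule integrable_power_of_AE_bounded[OF N.finite_measure_axioms V(1,2)])
  have iU1: "integrable M U" and iV1: "integrable N V"
    using iU[of 1] iV[of 1] by simp_all
  show "(\<integral>x. (\<integral>y. U x + V y \<partial>N) \<partial>M) = 0"
    using iU1 iV1 by (simp add: N.prob_space U(3) V(3))
  have sq: "(u + w)\<^sup>2 = u\<^sup>2 + (2 * u * w + w\<^sup>2)" for u w :: real
    by (simp add: power2_eq_square algebra_simps)
  show "(\<integral>x. (\<integral>y. (U x + V y)\<^sup>2 \<partial>N) \<partial>M) = (\<integral>x. U x ^ 2 \<partial>M) + (\<integral>y. V y ^ 2 \<partial>N)"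
    unfolding sq using iU iV1 iV[of 2] by (simp add: N.prob_space M.prob_space V(3))
  have quart: "(u + w) ^ 4 = u ^ 4 + (4 * u ^ 3 * w + (6 * u\<^sup>2 * w\<^sup>2 + (4 * u * w ^ 3 + w ^ 4)))"
    for u w :: real
    by (simp add: power_numeral_reduce algebra_simps)
  show "(\<integral>x. (\<integral>y. (U x + V y) ^ 4 \<partial>N) \<partial>M)
      = (\<integral>x. U x ^ 4 \<partial>M) + 6 * (\<integral>x. U x ^ 2 \<partial>M) * (\<integral>y. V y ^ 2 \<partial>N) + (\<integral>y. V y ^ 4 \<partial>N)"
    unfolding quart using iU iU1 iV iV1 by (simp add: N.prob_space M.prob_space U(3) V(3))
qed

lemma AE_PiM_abs_sum_le:
  fixes f :: "'a \<Rightarrow> real"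
  assumes "prob_space M" "AE x in M. \<bar>f x\<bar> \<le> C"
  shows "AE x in PiM {..<n} (\<lambda>_. M). \<bar>\<Sum>i<n. f (x i)\<bar> \<le> real n * C"
proof -
  have "AE x in PiM {..<n} (\<lambda>_. M). \<forall>i\<in>{..<n}. \<bar>f (x i)\<bar> \<le> C"
    by (rule AE_finite_allI) (auto intro!: AE_PiM_component assms)
  then show ?thesis
  proof eventually_elim
    case (elim x)
    have "\<bar>\<Sum>i<n. f (x i)\<bar> \<le> (\<Sum>i<n. \<bar>f (x i)\<bar>)" by (rule sum_abs)
    also have "\<dots> \<le> (\<Sum>i<n. C)" using elim by (intro sum_mono) auto
    finally show ?case by simp
  qed
qed

lemma integral_PiM_lessThan_Suc_sum:
  fixes f :: "'a \<Rightarrow> real" and F :: "real \<Rightarrow> real"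
  assumes "prob_space M" "integrable (PiM {..<Suc n} (\<lambda>_. M)) (\<lambda>x. F (\<Sum>i<Suc n. f (x i)))"
  shows "(\<integral>x. F (\<Sum>i<Suc n. f (x i)) \<partial>PiM {..<Suc n} (\<lambda>_. M))
    = (\<integral>x. (\<integral>y. F ((\<Sum>i<n. f (x i)) + f y) \<partial>M) \<partial>PiM {..<n} (\<lambda>_. M))"
proof -
  interpret prob_space M by fact
  interpret product_prob_space "\<lambda>_. M" UNIV by unfold_locales
  have lessThan_Suc: "{..<Suc n} = insert n {..<n}" by auto
  have "(\<integral>x. F (\<Sum>i<Suc n. f (x i)) \<partial>PiM {..<Suc n} (\<lambda>_. M))
      = (\<integral>x. (\<integral>y. F (\<Sum>i<Suc n. f ((x(n := y)) i)) \<partial>M) \<partial>PiM {..<n} (\<lambda>_. M))"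
    using product_integral_insert[of "{..<n}" n "\<lambda>x. F (\<Sum>i<Suc n. f (x i))"] assms(2)
    unfolding lessThan_Suc by simp
  also have "\<dots> = (\<integral>x. (\<integral>y. F ((\<Sum>i<n. f (x i)) + f y) \<partial>M) \<partial>PiM {..<n} (\<lambda>_. M))"
    by (intro Bochner_Integration.integral_cong refl arg_cong[where f = F]) (simp add: add.commute)
  finally show ?thesis .
qed

lemma iid_sum_moments:
  fixes f :: "'a \<Rightarrow> real"
  assumes M: "prob_space M" and f: "f \<in> borel_measurable M" "AE x in M. \<bar>f x\<bar> \<le> C"
    "(\<integral>x. f x \<partial>M) = 0"
  shows "(\<integral>x. (\<Sum>i<n. f (x i)) \<partial>PiM {..<n} (\<lambda>_. M)) = 0"
    and "(\<integral>x. (\<Sum>i<n. f (x i))\<^sup>2 \<partial>PiM {..<n} (\<lambda>_. M)) = real n * (\<integral>x. f x ^ 2 \<partial>M)"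
    and "(\<integral>x. (\<Sum>i<n. f (x i)) ^ 4 \<partial>PiM {..<n} (\<lambda>_. M))
      \<le> real n * C\<^sup>2 * (\<integral>x. f x ^ 2 \<partial>M) + 3 * (real n)\<^sup>2 * (\<integral>x. f x ^ 2 \<partial>M)\<^sup>2"
proof -
  interpret M: prob_space M by fact
  define v where "v = (\<integral>x. f x ^ 2 \<partial>M)"
  have v_nonneg: "0 \<le> v" unfolding v_def by simp
  have m4: "(\<integral>x. f x ^ 4 \<partial>M) \<le> C\<^sup>2 * v"
    unfolding v_def
    by (rule integral_power4_le_bound_times_square[OF M.finite_measure_axioms f(1,2)])
  have "(\<integral>x. (\<Sum>i<n. f (x i)) \<partial>PiM {..<n} (\<lambda>_. M)) = 0
    \<and> (\<integral>x. (\<Sum>i<n. f (x i))\<^sup>2 \<partial>PiM {..<n} (\<lambda>_. M)) = real n * v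
    \<and> (\<integral>x. (\<Sum>i<n. f (x i)) ^ 4 \<partial>PiM {..<n} (\<lambda>_. M)) \<le> real n * C\<^sup>2 * v + 3 * (real n)\<^sup>2 * v\<^sup>2"
  proof (induction n)
    case 0
    interpret prob_space "PiM {..<0::nat} (\<lambda>_. M)" by (rule prob_space_PiM) (use M in auto)
    show ?case by simp
  next
    case (Suc n)
    let ?P = "\<lambda>m. PiM {..<m} (\<lambda>_. M)" and ?S = "\<lambda>m x. \<Sum>i<m. f (x i)"
    have P: "prob_space (?P m)" for m by (rule prob_space_PiM) (use M in auto)
    have S_meas: "?S m \<in> borel_measurable (?P m)" for m using f(1) by measurable
    have S_bound: "AE x in ?P m. \<bar>?S m x\<bar> \<le> real m * C" for m
      by (rule AE_PiM_abs_sum_le[OF M f(2)])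
    have step: "(\<integral>x. ?S (Suc n) x ^ k \<partial>?P (Suc n)) = (\<integral>x. (\<integral>y. (?S n x + f y) ^ k \<partial>M) \<partial>?P n)"
      for k
      by (rule integral_PiM_lessThan_Suc_sum[OF M]) (rule integrable_power_of_AE_bounded
          [OF prob_space.finite_measure[OF P] S_meas S_bound])
    note moments = iterated_integral_moments_of_sum[OF P[of n] M S_meas[of n] S_bound[of n]
        conjunct1[OF Suc.IH] f]
    have "(\<integral>x. ?S (Suc n) x \<partial>?P (Suc n)) = 0"
      using step[of 1] moments(1) by simp
    moreover have "(\<integral>x. (?S (Suc n) x)\<^sup>2 \<partial>?P (Suc n)) = real (Suc n) * v"
      using step[of 2] moments(2) Suc.IH by (simp add: v_def algebra_simps)
    moreover have "(\<integral>x. ?S (Suc n) x ^ 4 \<partial>?P (Suc n))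
        \<le> real (Suc n) * C\<^sup>2 * v + 3 * (real (Suc n))\<^sup>2 * v\<^sup>2"
    proof -
      have "(\<integral>x. ?S (Suc n) x ^ 4 \<partial>?P (Suc n))
          = (\<integral>x. ?S n x ^ 4 \<partial>?P n) + 6 * (real n * v) * v + (\<integral>x. f x ^ 4 \<partial>M)"
        using step[of 4] moments(3) Suc.IH by (simp add: v_def)
      also have "\<dots> \<le> (real n * C\<^sup>2 * v + 3 * (real n)\<^sup>2 * v\<^sup>2) + 6 * (real n * v) * v + C\<^sup>2 * v"
        using Suc.IH m4 by simp
      also have "\<dots> \<le> real (Suc n) * C\<^sup>2 * v + 3 * (real (Suc n))\<^sup>2 * v\<^sup>2"
        using v_nonneg by (simp add: algebra_simps power2_eq_square)
      finally show ?thesis .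
    qed
    ultimately show ?case by blast
  qed
  then show "(\<integral>x. (\<Sum>i<n. f (x i)) \<partial>PiM {..<n} (\<lambda>_. M)) = 0"
    and "(\<integral>x. (\<Sum>i<n. f (x i))\<^sup>2 \<partial>PiM {..<n} (\<lambda>_. M)) = real n * (\<integral>x. f x ^ 2 \<partial>M)"
    and "(\<integral>x. (\<Sum>i<n. f (x i)) ^ 4 \<partial>PiM {..<n} (\<lambda>_. M))
      \<le> real n * C\<^sup>2 * (\<integral>x. f x ^ 2 \<partial>M) + 3 * (real n)\<^sup>2 * (\<integral>x. f x ^ 2 \<partial>M)\<^sup>2"
    by (simp_all add: v_def)
qed

lemma iid_mean_moments:
  fixes f :: "'a \<Rightarrow> real"
  assumes M: "prob_space M" and f: "f \<in> borel_measurable M" "AE x in M. \<bar>f x\<bar> \<le> C"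
    "(\<integral>x. f x \<partial>M) = 0"
    and n: "0 < n" and C: "C\<^sup>2 \<le> real n * (\<integral>x. f x ^ 2 \<partial>M)"
  shows "(\<integral>x. (\<Sum>i<n. f (x i)) / real n \<partial>PiM {..<n} (\<lambda>_. M)) = 0"
    and "(\<integral>x. ((\<Sum>i<n. f (x i)) / real n)\<^sup>2 \<partial>PiM {..<n} (\<lambda>_. M)) = (\<integral>x. f x ^ 2 \<partial>M) / real n"
    and "(\<integral>x. ((\<Sum>i<n. f (x i)) / real n) ^ 4 \<partial>PiM {..<n} (\<lambda>_. M))
      \<le> 4 * ((\<integral>x. f x ^ 2 \<partial>M) / real n)\<^sup>2"
proof -
  define v where "v = (\<integral>x. f x ^ 2 \<partial>M)"
  have v_nonneg: "0 \<le> v" unfolding v_def by simp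
  note S = iid_sum_moments[OF M f, of n, folded v_def]
  show "(\<integral>x. (\<Sum>i<n. f (x i)) / real n \<partial>PiM {..<n} (\<lambda>_. M)) = 0"
    using S(1) by simp
  show "(\<integral>x. ((\<Sum>i<n. f (x i)) / real n)\<^sup>2 \<partial>PiM {..<n} (\<lambda>_. M)) = v / real n"
    using S(2) n by (simp add: power_divide power2_eq_square)
  have "(\<integral>x. ((\<Sum>i<n. f (x i)) / real n) ^ 4 \<partial>PiM {..<n} (\<lambda>_. M))
      = (\<integral>x. (\<Sum>i<n. f (x i)) ^ 4 \<partial>PiM {..<n} (\<lambda>_. M)) / real n ^ 4"
    by (simp add: power_divide)
  also have "\<dots> \<le> (real n * C\<^sup>2 * v + 3 * (real n)\<^sup>2 * v\<^sup>2) / real n ^ 4"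
    using S(3) by (simp add: divide_right_mono)
  also have "\<dots> \<le> (real n * (real n * v) * v + 3 * (real n)\<^sup>2 * v\<^sup>2) / real n ^ 4"
    using C v_nonneg unfolding v_def by (intro divide_right_mono add_right_mono mult_right_mono
        mult_left_mono) auto
  also have "\<dots> = 4 * (v / real n)\<^sup>2"
    using n by (simp add: field_simps power2_eq_square power4_eq_xxxx)
  finally show "(\<integral>x. ((\<Sum>i<n. f (x i)) / real n) ^ 4 \<partial>PiM {..<n} (\<lambda>_. M)) \<le> 4 * (v / real n)\<^sup>2" .
qed

lemma AE_pair_measure_abs_add_le:
  fixes U :: "'a \<Rightarrow> real" and V :: "'b \<Rightarrow> real"
  assumes "prob_space M" "prob_space N" "U \<in> borel_measurable M" "V \<in> borel_measurable N"
    "AE x in M. \<bar>U x\<bar> \<le> c" "AE y in N. \<bar>V y\<bar> \<le> d"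
  shows "AE z in M \<Otimes>\<^sub>M N. \<bar>U (fst z) + V (snd z)\<bar> \<le> c + d"
proof -
  interpret pair_prob_space M N
    using assms(1,2)
    by (simp add: pair_prob_space_def pair_sigma_finite_def prob_space_imp_sigma_finite)
  have "AE z in M \<Otimes>\<^sub>M N. \<bar>U (fst z)\<bar> \<le> c \<and> \<bar>V (snd z)\<bar> \<le> d"
  proof (rule AE_pair_measure)
    show "{z \<in> space (M \<Otimes>\<^sub>M N). \<bar>U (fst z)\<bar> \<le> c \<and> \<bar>V (snd z)\<bar> \<le> d} \<in> sets (M \<Otimes>\<^sub>M N)"
      using assms(3,4) by measurable
    show "AE x in M. AE y in N. \<bar>U (fst (x, y))\<bar> \<le> c \<and> \<bar>V (snd (x, y))\<bar> \<le> d"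
      using assms(5) by eventually_elim (use assms(6) in auto)
  qed
  then show ?thesis by eventually_elim auto
qed

lemma two_sample_mean_difference_moments:
  fixes f0 :: "'a \<Rightarrow> real" and f1 :: "'b \<Rightarrow> real"
  assumes M0: "prob_space M0" and f0: "f0 \<in> borel_measurable M0" "AE x in M0. \<bar>f0 x\<bar> \<le> C"
    "(\<integral>x. f0 x \<partial>M0) = 0"
    and M1: "prob_space M1" and f1: "f1 \<in> borel_measurable M1" "AE x in M1. \<bar>f1 x\<bar> \<le> C"
    "(\<integral>x. f1 x \<partial>M1) = 0"
    and n0: "0 < n0" "C\<^sup>2 \<le> real n0 * (\<integral>x. f0 x ^ 2 \<partial>M0)"
    and n1: "0 < n1" "C\<^sup>2 \<le> real n1 * (\<integral>x. f1 x ^ 2 \<partial>M1)"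
  defines "P \<equiv> PiM {..<n0} (\<lambda>_. M0) \<Otimes>\<^sub>M PiM {..<n1} (\<lambda>_. M1)"
    and "D \<equiv> \<lambda>uv. (\<Sum>i<n1. f1 (snd uv i)) / real n1 - (\<Sum>i<n0. f0 (fst uv i)) / real n0"
    and "s2 \<equiv> (\<integral>x. f0 x ^ 2 \<partial>M0) / real n0 + (\<integral>x. f1 x ^ 2 \<partial>M1) / real n1"
  shows "prob_space P" and "D \<in> borel_measurable P" and "integrable P (\<lambda>uv. D uv ^ k)"
    and "(\<integral>uv. D uv ^ 2 \<partial>P) = s2" and "(\<integral>uv. D uv ^ 4 \<partial>P) \<le> 4 * s2\<^sup>2"
proof -
  let ?P0 = "PiM {..<n0} (\<lambda>_. M0)" and ?P1 = "PiM {..<n1} (\<lambda>_. M1)"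
  define U where "U u = (\<Sum>i<n0. - f0 (u i)) / real n0" for u
  define V where "V v = (\<Sum>i<n1. f1 (v i)) / real n1" for v
  have D_eq: "D = (\<lambda>uv. U (fst uv) + V (snd uv))"
    by (simp add: D_def U_def V_def sum_negf)
  have P0: "prob_space ?P0" and P1: "prob_space ?P1"
    by (auto intro!: prob_space_PiM M0 M1)
  show P: "prob_space P"
    unfolding P_def by (rule prob_space_pair[OF P0 P1])
  interpret pair_prob_space ?P0 ?P1
    using P0 P1 by (simp add: pair_prob_space_def pair_sigma_finite_def prob_space_imp_sigma_finite)
  have f0': "(\<lambda>x. - f0 x) \<in> borel_measurable M0" "AE x in M0. \<bar>- f0 x\<bar> \<le> C"
    "(\<integral>x. - f0 x \<partial>M0) = 0" "C\<^sup>2 \<le> real n0 * (\<integral>x. (- f0 x)\<^sup>2 \<partial>M0)"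
    using f0 n0 by auto
  note mom0 = iid_mean_moments[OF M0 f0'(1-3) n0(1) f0'(4), folded U_def, simplified]
  note mom1 = iid_mean_moments[OF M1 f1 n1, folded V_def]
  have U_meas: "U \<in> borel_measurable ?P0" and V_meas: "V \<in> borel_measurable ?P1"
    unfolding U_def V_def using f0(1) f1(1) by measurable
  have U_bound: "AE u in ?P0. \<bar>U u\<bar> \<le> C"
    using AE_PiM_abs_sum_le[OF M0 f0'(2), of n0]
    by eventually_elim (use n0 in \<open>simp add: U_def field_simps\<close>)
  have V_bound: "AE v in ?P1. \<bar>V v\<bar> \<le> C"
    using AE_PiM_abs_sum_le[OF M1 f1(2), of n1]
    by eventually_elim (use n1 in \<open>simp add: V_def field_simps\<close>)
  show D_meas: "D \<in> borel_measurable P"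
    unfolding D_eq P_def using U_meas V_meas by measurable
  have D_bound: "AE uv in P. \<bar>D uv\<bar> \<le> C + C"
    unfolding D_eq P_def
    by (rule AE_pair_measure_abs_add_le[OF P0 P1 U_meas V_meas U_bound V_bound])
  show D_int: "integrable P (\<lambda>uv. D uv ^ k)" for k
    by (rule integrable_power_of_AE_bounded[OF _ D_meas D_bound])
      (rule prob_space.finite_measure[OF P])
  note moments =
    iterated_integral_moments_of_sum[OF P0 P1 U_meas U_bound mom0(1) V_meas V_bound mom1(1)]
  have fubini: "(\<integral>uv. D uv ^ k \<partial>P) = (\<integral>u. (\<integral>v. (U u + V v) ^ k \<partial>?P1) \<partial>?P0)" for k
    using integral_fst'[OF D_int[of k, unfolded P_def]] by (simp add: P_def D_eq)
  show "(\<integral>uv. D uv ^ 2 \<partial>P) = s2"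
    using fubini[of 2] moments(2) mom0(2) mom1(2) by (simp add: s2_def)
  define a b where "a = (\<integral>x. f0 x ^ 2 \<partial>M0) / real n0" and "b = (\<integral>x. f1 x ^ 2 \<partial>M1) / real n1"
  have "a * b \<ge> 0"
    unfolding a_def b_def by simp
  have "(\<integral>uv. D uv ^ 4 \<partial>P) \<le> 4 * a\<^sup>2 + 6 * a * b + 4 * b\<^sup>2"
    using fubini[of 4] moments(3) mom0(2,3) mom1(2,3) unfolding a_def b_def by simp
  also have "\<dots> \<le> 4 * s2\<^sup>2"
    using \<open>a * b \<ge> 0\<close> unfolding s2_def a_def[symmetric] b_def[symmetric]
    by (simp add: power2_eq_square algebra_simps)
  finally show "(\<integral>uv. D uv ^ 4 \<partial>P) \<le> 4 * s2\<^sup>2" .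
qed

text \<open>The quartic is \<open>(r - 1/576) (144 - r) / 5184 - r / 2985984\<close> in \<open>r = (t/s)\<^sup>2\<close>, hence
  negative outside the band, and its maximum over all \<open>r\<close> is below \<open>1\<close>.\<close>
lemma quartic_le_band_indicator:
  fixes s t :: real
  assumes s: "0 < s"
  shows "t\<^sup>2 / (36 * s\<^sup>2) - t ^ 4 / (5184 * s ^ 4) - 1 / 20736
    \<le> (if s / 24 \<le> \<bar>t\<bar> \<and> \<bar>t\<bar> \<le> 12 * s then 1 else 0)"
proof -
  define r where "r = (t / s)\<^sup>2"
  have r_nonneg: "0 \<le> r" unfolding r_def by simp
  have quartic: "t\<^sup>2 / (36 * s\<^sup>2) - t ^ 4 / (5184 * s ^ 4) - 1 / 20736
      = (r - 1 / 576) * (144 - r) / 5184 - r / 2985984"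
    using s unfolding r_def by (simp add: field_simps power2_eq_square power4_eq_xxxx)
  have lower: "s / 24 \<le> \<bar>t\<bar> \<longleftrightarrow> 1 / 576 \<le> r"
  proof -
    have "s / 24 \<le> \<bar>t\<bar> \<longleftrightarrow> (s / 24)\<^sup>2 \<le> t\<^sup>2"
      using abs_le_square_iff[of "s / 24" t] s by simp
    then show ?thesis
      using s unfolding r_def by (simp add: field_simps power2_eq_square)
  qed
  have upper: "\<bar>t\<bar> \<le> 12 * s \<longleftrightarrow> r \<le> 144"
  proof -
    have "\<bar>t\<bar> \<le> 12 * s \<longleftrightarrow> t\<^sup>2 \<le> (12 * s)\<^sup>2"
      using abs_le_square_iff[of t "12 * s"] s by simp
    then show ?thesis
      using s unfolding r_def by (simp add: field_simps power2_eq_square)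
  qed
  show ?thesis
  proof (cases "1 / 576 \<le> r \<and> r \<le> 144")
    case True
    have "0 \<le> (r - 72)\<^sup>2" by simp
    then have "(r - 1 / 576) * (144 - r) \<le> 5184"
      using True by (simp add: power2_eq_square field_simps)
    then show ?thesis
      using True lower upper r_nonneg unfolding quartic by simp
  next
    case False
    then have "(r - 1 / 576) * (144 - r) \<le> 0"
      by (auto simp: mult_le_0_iff)
    then have "(r - 1 / 576) * (144 - r) / 5184 - r / 2985984 \<le> 0"
      using r_nonneg by linarith
    moreover have "\<not> (s / 24 \<le> \<bar>t\<bar> \<and> \<bar>t\<bar> \<le> 12 * s)"
      using False lower upper by simp
    ultimately show ?thesis
      unfolding quartic by (simp only: if_not_P if_False)
  qed
qed

text \<open>A Paley--Zygmund type bound: the expectation of the quartic above is at least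
  \<open>1/36 - 4/5184 - 1/20736 = 559/20736\<close>.\<close>
lemma prob_band_ge_of_fourth_moment_le:
  fixes W :: "'a \<Rightarrow> real"
  assumes M: "prob_space M" and W: "W \<in> borel_measurable M"
    and W_int: "integrable M (\<lambda>x. W x ^ 2)" "integrable M (\<lambda>x. W x ^ 4)"
    and s: "0 < s" and W2: "(\<integral>x. W x ^ 2 \<partial>M) = s\<^sup>2" and W4: "(\<integral>x. W x ^ 4 \<partial>M) \<le> 4 * s ^ 4"
  shows "559 / 20736 \<le> measure M {x \<in> space M. s / 24 \<le> \<bar>W x\<bar> \<and> \<bar>W x\<bar> \<le> 12 * s}"
proof -
  interpret prob_space M by fact
  define E where "E = {x \<in> space M. s / 24 \<le> \<bar>W x\<bar> \<and> \<bar>W x\<bar> \<le> 12 * s}"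
  define q where "q t = t\<^sup>2 / (36 * s\<^sup>2) - t ^ 4 / (5184 * s ^ 4) - 1 / 20736" for t
  have E_sets: "E \<in> sets M" unfolding E_def using W by measurable
  have "559 / 20736 \<le> s\<^sup>2 / (36 * s\<^sup>2) - 4 * s ^ 4 / (5184 * s ^ 4) - 1 / 20736"
    using s by (simp add: field_simps)
  also have "\<dots> \<le> (\<integral>x. W x ^ 2 \<partial>M) / (36 * s\<^sup>2) - (\<integral>x. W x ^ 4 \<partial>M) / (5184 * s ^ 4) - 1 / 20736"
    using divide_right_mono[OF W4, of "5184 * s ^ 4"] unfolding W2 by simp
  also have "\<dots> = (\<integral>x. q (W x) \<partial>M)"
    unfolding q_def using W_int by (simp add: prob_space)
  also have "\<dots> \<le> (\<integral>x. indicator E x \<partial>M)"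
  proof (rule integral_mono)
    show "integrable M (\<lambda>x. q (W x))" unfolding q_def using W_int by simp
    show "integrable M (indicator E :: 'a \<Rightarrow> real)"
      using E_sets by (simp add: emeasure_finite less_top[symmetric])
    show "q (W x) \<le> indicator E x" if "x \<in> space M" for x
      using quartic_le_band_indicator[OF s, of "W x"] that
      unfolding q_def E_def indicator_def by auto
  qed
  also have "\<dots> = measure M E" using E_sets by simp
  finally show ?thesis unfolding E_def .
qed

lemma deviation_band_iff:
  fixes X Y s :: real
  assumes "0 < s"
  shows "(s / 24 \<le> \<bar>X - Y\<bar> \<and> \<bar>X - Y\<bar> \<le> 12 * s) \<longleftrightarrow>
    (12 * s \<ge> \<bar>X - Y\<bar> \<and> \<bar>X - Y\<bar> \<ge> s / 24
      \<and> (\<bar>Y\<bar> \<ge> 13 / 2 * s \<longrightarrow> \<bar>\<bar>X\<bar> - \<bar>Y\<bar>\<bar> \<ge> s / 24)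
      \<and> (\<bar>Y\<bar> \<le> s / 72 \<longrightarrow> \<bar>\<bar>X\<bar> - \<bar>Y\<bar>\<bar> \<ge> s / 72))"
  using assms by (auto simp: abs_if split: if_splits)

lemma loss_measurable:
  assumes "(\<lambda>z. g (fst z)) \<in> borel_measurable M" "snd \<in> borel_measurable M"
  shows "loss g \<in> borel_measurable M"
  unfolding loss_def using assms by measurable

lemma AE_loss_in_unit_interval:
  assumes "\<And>x. g x \<in> {0..1}" "AE z in M. snd z \<in> {0..1}"
  shows "AE z in M. 0 \<le> loss g z \<and> loss g z \<le> 1"
  using assms(2)
proof eventually_elim
  case (elim z)
  then show ?case using assms(1)[of "fst z"] by (auto simp: loss_def)
qed

lemma sample_size_bounds:
  fixes B v0 v1 :: real
  assumes "0 < B" "0 < v0" "0 < v1" "B\<^sup>2 / v0 \<le> real n0" "B\<^sup>2 / v1 \<le> real n0" "n0 \<le> n1"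
  shows "0 < n0" "B\<^sup>2 \<le> real n0 * v0" "0 < n1" "B\<^sup>2 \<le> real n1 * v1"
proof -
  show n0_bound: "B\<^sup>2 \<le> real n0 * v0"
    using assms(2,4) by (simp add: divide_le_eq mult.commute)
  have "0 < B\<^sup>2"
    using assms(1) by simp
  then show "0 < n0"
    using n0_bound by (intro Nat.gr0I) auto
  then show "0 < n1"
    using assms(6) by simp
  have "B\<^sup>2 \<le> real n0 * v1"
    using assms(3,5) by (simp add: divide_le_eq mult.commute)
  also have "\<dots> \<le> real n1 * v1"
    using assms(3,6) by (intro mult_right_mono) auto
  finally show "B\<^sup>2 \<le> real n1 * v1" .
qed

lemma sets_cc_dist [simp, measurable_cong]: "sets (cc_dist T pr a) = sets (T a)"
  by (simp add: cc_dist_def)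

lemma space_cc_dist [simp]: "space (cc_dist T pr a) = space (T a)"
  by (simp add: cc_dist_def)

context
  fixes T :: "nat \<Rightarrow> ('x \<times> real) measure" and pr :: "'x \<times> real \<Rightarrow> nat \<Rightarrow> real" and a :: nat
  assumes prob_T: "prob_space (T a)"
    and pr_measurable [measurable]: "(\<lambda>z. pr z a) \<in> borel_measurable (T a)"
    and pr_range: "\<And>z. z \<in> space (T a) \<Longrightarrow> 0 < pr z a \<and> pr z a \<le> 1"
begin

lemma integral_propensity_pos: "0 < (\<integral>z. pr z a \<partial>T a)"
proof -
  interpret prob_space "T a" by (rule prob_T)
  have pr_int: "integrable (T a) (\<lambda>z. pr z a)"
    by (rule integrable_const_bound[where B = 1]) (auto simp: pr_range less_imp_le)
  have pr_nonneg: "AE z in T a. 0 \<le> pr z a"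
    using pr_range by (auto simp: less_imp_le)
  have "\<not> (AE z in T a. pr z a = 0)"
  proof
    assume "AE z in T a. pr z a = 0"
    then have "AE z in T a. False"
      by (rule AE_mp) (auto intro!: AE_I2 dest: pr_range)
    then show False by simp
  qed
  then show ?thesis
    using integral_nonneg_eq_0_iff_AE[OF pr_int pr_nonneg] integral_nonneg_AE[OF pr_nonneg]
    by linarith
qed

lemma integral_cc_dist:
  assumes "f \<in> borel_measurable (T a)"
  shows "(\<integral>z. f z \<partial>cc_dist T pr a) = (\<integral>z. pr z a / (\<integral>z'. pr z' a \<partial>T a) * f z \<partial>T a)"
  unfolding cc_dist_def using assms integral_propensity_pos pr_range
  by (subst integral_density) (auto intro!: AE_I2 simp: less_imp_le)

lemma prob_space_cc_dist: "prob_space (cc_dist T pr a)"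
proof
  interpret prob_space "T a" by (rule prob_T)
  have "emeasure (cc_dist T pr a) (space (cc_dist T pr a))
      = ennreal (\<integral>z. pr z a / (\<integral>z'. pr z' a \<partial>T a) \<partial>T a)"
    unfolding cc_dist_def using integral_propensity_pos pr_range
    by (simp add: emeasure_density nn_integral_eq_integral integrable_const_bound[where B = 1]
        less_imp_le AE_I2 divide_le_eq)
  also have "\<dots> = 1"
    using integral_propensity_pos by simp
  finally show "emeasure (cc_dist T pr a) (space (cc_dist T pr a)) = 1" .
qed

lemma true_weight_eq:
  assumes "z \<in> space (T a)"
  shows "true_weight T pr z a = (\<integral>z'. pr z' a \<partial>T a) / pr z a"
proof -
  interpret prob_space "T a" by (rule prob_T)
  have "(\<integral>z'. 1 / pr z' a \<partial>cc_dist T pr a) = (\<integral>z'. 1 / (\<integral>z'. pr z' a \<partial>T a) \<partial>T a)"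
    unfolding integral_cc_dist[OF borel_measurable_divide[OF borel_measurable_const pr_measurable]]
    by (intro Bochner_Integration.integral_cong) (auto dest!: pr_range simp: field_simps)
  then show ?thesis
    using pr_range[OF assms] by (simp add: true_weight_def prob_space)
qed

lemma integral_true_weight_cc_dist:
  assumes [measurable]: "f \<in> borel_measurable (T a)"
  shows "(\<integral>z. true_weight T pr z a * f z \<partial>cc_dist T pr a) = (\<integral>z. f z \<partial>T a)"
proof -
  have "(\<integral>z. true_weight T pr z a * f z \<partial>cc_dist T pr a)
      = (\<integral>z. pr z a / (\<integral>z'. pr z' a \<partial>T a) * (true_weight T pr z a * f z) \<partial>T a)"
    by (rule integral_cc_dist) (simp add: true_weight_def)
  also have "\<dots> = (\<integral>z. f z \<partial>T a)"
  proof (rule Bochner_Integration.integral_cong)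
    fix z assume "z \<in> space (T a)"
    moreover from this have "pr z a \<noteq> 0" using pr_range by fastforce
    moreover have "(\<integral>z'. pr z' a \<partial>T a) \<noteq> 0" using integral_propensity_pos by simp
    ultimately show "pr z a / (\<integral>z'. pr z' a \<partial>T a) * (true_weight T pr z a * f z) = f z"
      by (simp add: true_weight_eq)
  qed simp
  finally show ?thesis .
qed

lemma true_weight_pos: "z \<in> space (T a) \<Longrightarrow> 0 < true_weight T pr z a"
  using integral_propensity_pos pr_range by (simp add: true_weight_eq)

lemma centered_weighted_loss_moments:
  fixes g :: "'x \<Rightarrow> real" and B :: real
  assumes loss_meas: "loss g \<in> borel_measurable (T a)"
    and loss_range: "AE z in T a. 0 \<le> loss g z \<and> loss g z \<le> 1"
    and weight_le: "\<And>z. z \<in> space (T a) \<Longrightarrow> true_weight T pr z a \<le> B"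
  defines "f \<equiv> \<lambda>z. true_weight T pr z a * loss g z - true_risk T g a"
  shows "f \<in> borel_measurable (cc_dist T pr a)"
    and "AE z in cc_dist T pr a. \<bar>f z\<bar> \<le> B"
    and "(\<integral>z. f z \<partial>cc_dist T pr a) = 0"
    and "(\<integral>z. f z ^ 2 \<partial>cc_dist T pr a) = sigma2 T pr g (true_weight T pr) a"
proof -
  interpret S: prob_space "cc_dist T pr a" by (rule prob_space_cc_dist)
  have S_space: "measure (cc_dist T pr a) (space (T a)) = 1"
    using S.prob_space by simp
  define h where "h z = true_weight T pr z a * loss g z" for z
  have h_meas: "h \<in> borel_measurable (cc_dist T pr a)"
    unfolding h_def true_weight_def using loss_meas by measurable
  have h_range: "AE z in cc_dist T pr a. 0 \<le> h z \<and> h z \<le> B"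
  proof -
    have "AE z in cc_dist T pr a. 0 \<le> loss g z \<and> loss g z \<le> 1"
      unfolding cc_dist_def by (subst AE_density) (auto intro: AE_mp[OF loss_range])
    then show ?thesis
    proof (rule AE_mp, intro AE_I2 impI)
      fix z assume z: "z \<in> space (cc_dist T pr a)" and l: "0 \<le> loss g z \<and> loss g z \<le> 1"
      have w: "0 < true_weight T pr z a" "true_weight T pr z a \<le> B"
        using z true_weight_pos weight_le by auto
      have "true_weight T pr z a * loss g z \<le> B * 1"
        using w l by (intro mult_mono) auto
      then show "0 \<le> h z \<and> h z \<le> B"
        using w l unfolding h_def by auto
    qed
  qed
  have h_int: "integrable (cc_dist T pr a) h"
    by (rule S.integrable_const_bound[where B = B]) (use h_range h_meas in auto)
  have h_mean: "(\<integral>z. h z \<partial>cc_dist T pr a) = true_risk T g a"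
    unfolding h_def true_risk_def by (rule integral_true_weight_cc_dist[OF loss_meas])
  have risk_range: "0 \<le> true_risk T g a" "true_risk T g a \<le> B"
    using integral_nonneg_AE[of h] integral_mono_AE[OF h_int, of "\<lambda>_. B"] h_range
    unfolding h_mean[symmetric] by (auto simp: S_space elim: AE_mp)
  show "AE z in cc_dist T pr a. \<bar>f z\<bar> \<le> B"
    using h_range by eventually_elim (use risk_range in \<open>auto simp: f_def h_def[symmetric]\<close>)
  show "f \<in> borel_measurable (cc_dist T pr a)"
    unfolding f_def h_def[symmetric] using h_meas by measurable
  show "(\<integral>z. f z \<partial>cc_dist T pr a) = 0"
    unfolding f_def h_def[symmetric] using h_int h_mean by (simp add: S_space)
  show "(\<integral>z. f z ^ 2 \<partial>cc_dist T pr a) = sigma2 T pr g (true_weight T pr) a"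
    unfolding sigma2_def f_def h_mean[symmetric] h_def by simp
qed

end

lemma emp_risk_eq_mean_add:
  assumes "0 < n"
  shows "emp_risk g w a n u = (\<Sum>i<n. w (u i) a * loss g (u i) - r) / real n + r"
  using assms by (simp add: emp_risk_def sum_subtractf field_simps)

theorem theorem2:
  fixes T :: "nat \<Rightarrow> ('x \<times> real) measure"
    and pr :: "'x \<times> real \<Rightarrow> nat \<Rightarrow> real"
    and g :: "'x \<Rightarrow> real"
    and n0 n1 :: nat
    and B :: real
  defines "\<omega> \<equiv> true_weight T pr"
  defines "s \<equiv> sqrt (sigma2 T pr g \<omega> 0 / real n0 + sigma2 T pr g \<omega> 1 / real n1)"
  assumes T_prob: "\<And>a. a \<in> {0, 1} \<Longrightarrow> prob_space (T a)"
    and T_sets: "sets (T 1) = sets (T 0)"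
    and g_range: "\<And>x. g x \<in> {0..1}"
    and y_range: "\<And>a. a \<in> {0, 1} \<Longrightarrow> AE z in T a. snd z \<in> {0..1}"
    and g_meas: "\<And>a. a \<in> {0, 1} \<Longrightarrow> (\<lambda>z. g (fst z)) \<in> borel_measurable (T a)"
    and y_meas: "\<And>a. a \<in> {0, 1} \<Longrightarrow> snd \<in> borel_measurable (T a)"
    and pr_meas: "\<And>a. a \<in> {0, 1} \<Longrightarrow> (\<lambda>z. pr z a) \<in> borel_measurable (T a)"
    and pr_range: "\<And>a z. a \<in> {0, 1} \<Longrightarrow> z \<in> space (T a) \<Longrightarrow> 0 < pr z a \<and> pr z a \<le> 1"
    and B_bdd: "bdd_above {\<omega> z a | z a. a \<in> {0, 1} \<and> z \<in> space (T a)}"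
    and B_def: "B = Sup {\<omega> z a | z a. a \<in> {0, 1} \<and> z \<in> space (T a)}"
    and sigma_pos: "\<And>a. a \<in> {0, 1} \<Longrightarrow> sigma2 T pr g \<omega> a > 0"
    and B_cond: "\<And>a. a \<in> {0, 1} \<Longrightarrow> B\<^sup>2 / sigma2 T pr g \<omega> a \<le> real n0"
    and n_le: "n0 \<le> n1"
  shows "measure (sample_space T pr n0 n1)
     {uv \<in> space (sample_space T pr n0 n1).
        (let D = (true_risk T g 0 - true_risk T g 1)
                 - (emp_risk g \<omega> 0 n0 (fst uv) - emp_risk g \<omega> 1 n1 (snd uv));
             DeltaT = \<bar>true_risk T g 0 - true_risk T g 1\<bar>;
             DeltaS = \<bar>emp_risk g \<omega> 0 n0 (fst uv) - emp_risk g \<omega> 1 n1 (snd uv)\<bar>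
         in 12 * s \<ge> \<bar>D\<bar> \<and> \<bar>D\<bar> \<ge> s / 24
            \<and> (DeltaS \<ge> 13 / 2 * s \<longrightarrow> \<bar>DeltaT - DeltaS\<bar> \<ge> s / 24)
            \<and> (DeltaS \<le> s / 72 \<longrightarrow> \<bar>DeltaT - DeltaS\<bar> \<ge> s / 72))}
     \<ge> 7 / 1440"
proof -
  have zero_one: "0 \<in> {0, 1::nat}" "1 \<in> {0, 1::nat}" by simp_all
  have weight_le: "\<omega> z a \<le> B" if "a \<in> {0, 1}" "z \<in> space (T a)" for a z
    unfolding B_def by (rule cSup_upper[OF _ B_bdd]) (use that in blast)
  define f where "f a z = \<omega> z a * loss g z - true_risk T g a" for a z
  have S: "prob_space (cc_dist T pr a)"
    and centered: "f a \<in> borel_measurable (cc_dist T pr a)" "AE z in cc_dist T pr a. \<bar>f a z\<bar> \<le> B"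
      "(\<integral>z. f a z \<partial>cc_dist T pr a) = 0" "(\<integral>z. f a z ^ 2 \<partial>cc_dist T pr a) = sigma2 T pr g \<omega> a"
    if "a \<in> {0, 1}" for a
    using prob_space_cc_dist[where T = T and pr = pr and a = a]
      centered_weighted_loss_moments[where T = T and pr = pr and a = a and g = g and B = B]
      T_prob[OF that] pr_meas[OF that] pr_range[OF that] weight_le[OF that]
      loss_measurable[OF g_meas[OF that] y_meas[OF that]]
      AE_loss_in_unit_interval[OF g_range y_range[OF that]]
    unfolding f_def \<omega>_def by simp_all
  have "0 < B"
  proof -
    interpret prob_space "T 0" by (rule T_prob) simp
    obtain z where "z \<in> space (T 0)" using not_empty by blast
    then show ?thesis
      using true_weight_pos[where T = T and pr = pr and a = 0 and z = z, OF T_prob pr_meas pr_range]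
        weight_le[of 0 z]
      by (simp add: \<omega>_def)
  qed
  note n = sample_size_bounds[OF this sigma_pos[OF zero_one(1)] sigma_pos[OF zero_one(2)]
      B_cond[OF zero_one(1)] B_cond[OF zero_one(2)] n_le]
  define D where "D uv = (\<Sum>i<n1. f 1 (snd uv i)) / real n1 - (\<Sum>i<n0. f 0 (fst uv i)) / real n0"
    for uv :: "(nat \<Rightarrow> 'x \<times> real) \<times> (nat \<Rightarrow> 'x \<times> real)"
  note group0 = S[OF zero_one(1)] centered[OF zero_one(1)]
    and group1 = S[OF zero_one(2)] centered[OF zero_one(2)]
  note deviation = two_sample_mean_difference_moments[OF group0(1-4) group1(1-4),
      unfolded group0(5) group1(5), OF n, folded sample_space_def D_def]
  have D_eq: "(true_risk T g 0 - true_risk T g 1)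
      - (emp_risk g \<omega> 0 n0 (fst uv) - emp_risk g \<omega> 1 n1 (snd uv)) = D uv" for uv
    unfolding emp_risk_eq_mean_add[OF n(1), where r = "true_risk T g 0"]
      emp_risk_eq_mean_add[OF n(3), where r = "true_risk T g 1"] D_def f_def by simp
  have "0 < sigma2 T pr g \<omega> 0 / real n0 + sigma2 T pr g \<omega> 1 / real n1"
    using sigma_pos[OF zero_one(1)] sigma_pos[OF zero_one(2)] n(1,3) by (intro add_pos_pos) simp_all
  then have s2: "s\<^sup>2 = sigma2 T pr g \<omega> 0 / real n0 + sigma2 T pr g \<omega> 1 / real n1" and "0 < s"
    unfolding s_def by simp_all
  have "559 / 20736 \<le> measure (sample_space T pr n0 n1)
      {uv \<in> space (sample_space T pr n0 n1). s / 24 \<le> \<bar>D uv\<bar> \<and> \<bar>D uv\<bar> \<le> 12 * s}"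
    using deviation(4,5)[folded s2]
    by (intro prob_band_ge_of_fourth_moment_le[OF deviation(1,2,3,3) \<open>0 < s\<close>])
      (simp_all add: power_mult[symmetric])
  then show ?thesis
    unfolding Let_def unfolding deviation_band_iff[OF \<open>0 < s\<close>, symmetric] unfolding D_eq by simp
qed

end
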